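(* Consider any connected measurement graph $\mathcal G$. For any $\delta>0$, the ML rule achieves \[ P_{\mathsf e}(\psi_{\mathrm{ml}})\le\frac{1}{(2n)^\delta-1}, \] provided that \[ \sup_{0<\alpha<1}\left\{(1-\alpha)\mathsf{Hel}_\alpha^{\min}\right\}\cdot\mathsf{mincut}\;\ge\;8\tau^{\mathrm{cut}}+(\delta+8)\log(2n)+4\log M. \]
   Context: Model: $n\ge2$, $M\ge2$, $\mathcal X=\{0,\dots,M-1\}$ with a group operation $+$; $x_i-x_j:=x_i+(-x_j)$; $\boldsymbol x+l\cdot\mathbf 1:=(x_1+l,\dots,x_n+l)$. Measurement graph $\mathcal G=(\mathcal V,\mathcal E)$ undirected on $\mathcal V=\{1,\dots,n\}$ (deterministic). $\mathbb P_0,\dots,\mathbb P_{M-1}$ are mutually absolutely continuous probability measures on an output space; given unknown $\boldsymbol x\in\mathcal X^n$, for each $(i,j)\in\mathcal E$, $i>j$, independently $y_{ij}\sim\mathbb P_{x_i-x_j}$. $\mathrm{dist}(\boldsymbol w,\boldsymbol x)=1-\max_l\mathbb I\{\boldsymbol w=\boldsymbol x+l\cdot\mathbf1\}$; $P_{\mathsf e}(\psi)=\max_{\boldsymbol x}\mathbb P\{\mathrm{dist}(\psi(\boldsymbol y),\boldsymbol x)\ne0\mid\boldsymbol x\}$; $\psi_{\mathrm{ml}}(\boldsymbol y)=\arg\max_{\boldsymbol x}\mathbb P\{\boldsymbol y\mid\boldsymbol x\}$. For $\alpha\in(0,1)$, $\mathsf{Hel}_\alpha(P\|Q)=\frac1{1-\alpha}[1-\int(\mathrm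 dP)^\alpha(\mathrm dQ)^{1-\alpha}]$ and $\mathsf{Hel}_\alpha^{\min}=\min_{l\ne k}\mathsf{Hel}_\alpha(\mathbb P_l\|\mathbb P_k)$. Graph metrics: $e(\mathcal S,\mathcal S^{\mathrm c})$ is the number of edges with one endpoint in $\mathcal S$ and the other in $\mathcal V\setminus\mathcal S$; $\mathsf{mincut}=\min\{e(\mathcal S,\mathcal S^{\mathrm c}):\emptyset\ne\mathcal S\subsetneq\mathcal V\}$; for an integer $m$, $\mathcal N(m)=\{\mathcal S\subseteq\mathcal V: e(\mathcal S,\mathcal S^{\mathrm c})\le m\}$; $\tau_k^{\mathrm{cut}}=\frac1k\log|\mathcal N(k\cdot\mathsf{mincut})|$ and the cut-homogeneity exponent is $\tau^{\mathrm{cut}}=\max_{k}\tau^{\mathrm{cut}}_k$, the maximum over positive integers $k$. *)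

theory Defs
  imports "HOL-Probability.Probability" "HOL-Algebra.Group"
begin

section \<open>Measurement graph (vertices V, undirected edges stored as pairs (i,j) with i > j)\<close>

definition graph_connected :: "nat set \<Rightarrow> (nat \<times> nat) set \<Rightarrow> bool" where
  "graph_connected V E \<longleftrightarrow> (\<forall>u\<in>V. \<forall>v\<in>V. (u, v) \<in> (E \<union> E\<inverse>)\<^sup>*)"

definition cut_size :: "(nat \<times> nat) set \<Rightarrow> nat set \<Rightarrow> nat" where
  "cut_size E S = card {e \<in> E. (fst e \<in> S) \<noteq> (snd e \<in> S)}"

definition mincut :: "nat set \<Rightarrow> (nat \<times> nat) set \<Rightarrow> nat" where
  "mincut V E = Min {cut_size E S | S. S \<noteq> {} \<and> S \<subset> V}"

definition cut_nbhd :: "nat set \<Rightarrow> (nat \<times> nat) set \<Rightarrow> nat \<Rightarrow> nat set set" where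
  "cut_nbhd V E m = {S. S \<subseteq> V \<and> cut_size E S \<le> m}"

definition tau_cut_k :: "nat set \<Rightarrow> (nat \<times> nat) set \<Rightarrow> nat \<Rightarrow> real" where
  "tau_cut_k V E k = ln (real (card (cut_nbhd V E (k * mincut V E)))) / real k"

text \<open>Cut-homogeneity exponent: maximum over positive integers k (the sup is attained).\<close>
definition tau_cut :: "nat set \<Rightarrow> (nat \<times> nat) set \<Rightarrow> real" where
  "tau_cut V E = (SUP k\<in>{1..}. tau_cut_k V E k)"

definition hel :: "'b measure \<Rightarrow> ('b \<Rightarrow> real) \<Rightarrow> ('b \<Rightarrow> real) \<Rightarrow> real \<Rightarrow> real" where
  "hel \<mu> f g \<alpha> = (1 / (1 - \<alpha>)) * (1 - (\<integral>y. f y powr \<alpha> * g y powr (1 - \<alpha>) \<partial>\<mu>))"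

definition hel_min :: "'b measure \<Rightarrow> (nat \<Rightarrow> 'b \<Rightarrow> real) \<Rightarrow> nat \<Rightarrow> real \<Rightarrow> real" where
  "hel_min \<mu> f M \<alpha> = Min {hel \<mu> (f l) (f k) \<alpha> | l k. l < M \<and> k < M \<and> l \<noteq> k}"

text \<open>Global shift x + l*1 (restricted to the vertex set, elements of X^n are extensional).\<close>
definition shift :: "nat monoid \<Rightarrow> nat set \<Rightarrow> (nat \<Rightarrow> nat) \<Rightarrow> nat \<Rightarrow> (nat \<Rightarrow> nat)" where
  "shift G V x l = restrict (\<lambda>i. x i \<otimes>\<^bsub>G\<^esub> l) V"

definition dist_zero :: "nat monoid \<Rightarrow> nat set \<Rightarrow> (nat \<Rightarrow> nat) \<Rightarrow> (nat \<Rightarrow> nat) \<Rightarrow> bool" where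
  "dist_zero G V w x \<longleftrightarrow> (\<exists>l\<in>carrier G. w = shift G V x l)"

definition gdiff :: "nat monoid \<Rightarrow> nat \<Rightarrow> nat \<Rightarrow> nat" where
  "gdiff G a b = a \<otimes>\<^bsub>G\<^esub> inv\<^bsub>G\<^esub> b"

definition obs_measure :: "nat monoid \<Rightarrow> 'b measure \<Rightarrow> (nat \<Rightarrow> 'b \<Rightarrow> real) \<Rightarrow> (nat \<times> nat) set
    \<Rightarrow> (nat \<Rightarrow> nat) \<Rightarrow> ((nat \<times> nat) \<Rightarrow> 'b) measure" where
  "obs_measure G \<mu> f E x =
     PiM E (\<lambda>e. density \<mu> (\<lambda>y. ennreal (f (gdiff G (x (fst e)) (x (snd e))) y)))"

definition likelihood :: "nat monoid \<Rightarrow> (nat \<Rightarrow> 'b \<Rightarrow> real) \<Rightarrow> (nat \<times> nat) set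
    \<Rightarrow> (nat \<Rightarrow> nat) \<Rightarrow> ((nat \<times> nat) \<Rightarrow> 'b) \<Rightarrow> real" where
  "likelihood G f E x y = (\<Prod>e\<in>E. f (gdiff G (x (fst e)) (x (snd e))) (y e))"

definition is_ml_rule :: "nat monoid \<Rightarrow> 'b measure \<Rightarrow> (nat \<Rightarrow> 'b \<Rightarrow> real) \<Rightarrow> nat set
    \<Rightarrow> (nat \<times> nat) set \<Rightarrow> (((nat \<times> nat) \<Rightarrow> 'b) \<Rightarrow> (nat \<Rightarrow> nat)) \<Rightarrow> bool" where
  "is_ml_rule G \<mu> f V E \<psi> \<longleftrightarrow>
     (\<forall>y\<in>space (PiM E (\<lambda>_. \<mu>)).
        \<psi> y \<in> (V \<rightarrow>\<^sub>E carrier G) \<and>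
        (\<forall>w\<in>V \<rightarrow>\<^sub>E carrier G. likelihood G f E w y \<le> likelihood G f E (\<psi> y) y))"

definition err_prob :: "nat monoid \<Rightarrow> 'b measure \<Rightarrow> (nat \<Rightarrow> 'b \<Rightarrow> real) \<Rightarrow> nat set
    \<Rightarrow> (nat \<times> nat) set \<Rightarrow> (((nat \<times> nat) \<Rightarrow> 'b) \<Rightarrow> (nat \<Rightarrow> nat)) \<Rightarrow> real" where
  "err_prob G \<mu> f V E \<psi> =
     Max {measure (obs_measure G \<mu> f E x)
            {y \<in> space (obs_measure G \<mu> f E x). \<not> dist_zero G V (\<psi> y) x}
          | x. x \<in> V \<rightarrow>\<^sub>E carrier G}"

end

theory Submission
  imports Defs
begin

text \<open>A labelling w that is not a global shift of x can beat x in likelihood only with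
  probability at most exp(-h)^d, by a Chernoff bound with the Hellinger affinity, where
  h = (1 - alpha) Hel_alpha^min and d counts the edges on which the differences of w and x disagree.
  Relabelling by x^-1 w turns d into the number of bichromatic edges of a nonconstant colouring,
  whose colour classes S_g satisfy sum_g e(S_g, S_g^c) <= 2d; and d >= mincut, so exp(-h)^d <=
  (2n)^-delta exp(-t d) with t = h - delta log(2n) / mincut.  Hence the union bound over wrong
  labellings is at most (2n)^-delta ((1 + Phi)^M - 1) with Phi = sum_S exp(-t e(S, S^c) / 2), and
  grouping the cuts into layers of width mincut, whose sizes the cut-homogeneity exponent
  controls, gives Phi <= 1 / (8 n M^2).\<close>

lemma borel_measurable_prod_components:
  assumes "finite I" "\<And>i. i \<in> I \<Longrightarrow> g i \<in> borel_measurable M"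
  shows "(\<lambda>y. \<Prod>i\<in>I. g i (y i) :: real) \<in> borel_measurable (PiM I (\<lambda>_. M))"
proof (rule borel_measurable_prod)
  fix i assume "i \<in> I"
  have "(\<lambda>y. y i) \<in> measurable (PiM I (\<lambda>_. M)) M"
    using measurable_component_singleton[OF \<open>i \<in> I\<close>, of "\<lambda>_. M"] by simp
  then show "(\<lambda>y. g i (y i)) \<in> borel_measurable (PiM I (\<lambda>_. M))"
    using assms(2)[OF \<open>i \<in> I\<close>] by (rule measurable_compose)
qed

lemma PiM_density_eq_density_prod:
  fixes M :: "'b measure" and g :: "'i \<Rightarrow> 'b \<Rightarrow> real"
  assumes fin: "finite I" and sf: "sigma_finite_measure M"
    and gm: "\<And>i. i \<in> I \<Longrightarrow> g i \<in> borel_measurable M"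
    and gn: "\<And>i y. i \<in> I \<Longrightarrow> 0 \<le> g i y"
    and gp: "\<And>i. i \<in> I \<Longrightarrow> prob_space (density M (\<lambda>y. ennreal (g i y)))"
  shows "PiM I (\<lambda>i. density M (\<lambda>y. ennreal (g i y)))
       = density (PiM I (\<lambda>_. M)) (\<lambda>y. ennreal (\<Prod>i\<in>I. g i (y i)))"
proof -
  \<comment> \<open>outside I the factors are irrelevant; M is used there so that the family is sigma-finite\<close>
  define M' where "M' i = (if i \<in> I then density M (\<lambda>y. ennreal (g i y)) else M)" for i
  interpret P': product_sigma_finite M'
    by (rule product_sigma_finite.intro) (auto simp: M'_def sf intro: prob_space_imp_sigma_finite gp)
  interpret P: product_sigma_finite "\<lambda>_. M"
    by (rule product_sigma_finite.intro) (rule sf)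
  have [measurable]: "(\<lambda>y. \<Prod>i\<in>I. g i (y i)) \<in> borel_measurable (PiM I (\<lambda>_. M))"
    by (rule borel_measurable_prod_components[OF fin gm])
  have "density (PiM I (\<lambda>_. M)) (\<lambda>y. ennreal (\<Prod>i\<in>I. g i (y i))) = PiM I M'"
  proof (rule P'.PiM_eqI[OF fin])
    show "sets (density (PiM I (\<lambda>_. M)) (\<lambda>y. ennreal (\<Prod>i\<in>I. g i (y i)))) = sets (PiM I M')"
      by (simp, rule sets_PiM_cong) (auto simp: M'_def)
  next
    fix A assume "\<And>i. i \<in> I \<Longrightarrow> A i \<in> sets (M' i)"
    then have A: "\<And>i. i \<in> I \<Longrightarrow> A i \<in> sets M" by (auto simp: M'_def)
    have "emeasure (density (PiM I (\<lambda>_. M)) (\<lambda>y. ennreal (\<Prod>i\<in>I. g i (y i)))) (Pi\<^sub>E I A)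
       = (\<integral>\<^sup>+ y. ennreal (\<Prod>i\<in>I. g i (y i)) * indicator (Pi\<^sub>E I A) y \<partial>PiM I (\<lambda>_. M))"
      by (rule emeasure_density) (use sets_PiM_I_finite[OF fin A] in measurable)
    also have "\<dots> = (\<integral>\<^sup>+ y. (\<Prod>i\<in>I. ennreal (g i (y i)) * indicator (A i) (y i)) \<partial>PiM I (\<lambda>_. M))"
    proof (rule nn_integral_cong)
      fix y assume "y \<in> space (PiM I (\<lambda>_. M))"
      then have "y \<in> extensional I" by (auto simp: space_PiM PiE_def)
      then have "(\<Prod>i\<in>I. indicator (A i) (y i) :: ennreal) = indicator (Pi\<^sub>E I A) y"
        using fin by (auto simp: indicator_def PiE_def Pi_def intro!: prod_zero)
      moreover have "(\<Prod>i\<in>I. ennreal (g i (y i))) = ennreal (\<Prod>i\<in>I. g i (y i))"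
        by (rule prod_ennreal) (simp add: gn)
      ultimately show "ennreal (\<Prod>i\<in>I. g i (y i)) * indicator (Pi\<^sub>E I A) y
          = (\<Prod>i\<in>I. ennreal (g i (y i)) * indicator (A i) (y i))"
        by (simp add: prod.distrib)
    qed
    also have "\<dots> = (\<Prod>i\<in>I. \<integral>\<^sup>+ z. ennreal (g i z) * indicator (A i) z \<partial>M)"
      by (rule P.product_nn_integral_prod[OF fin]) (use gm A in measurable)
    also have "\<dots> = (\<Prod>i\<in>I. emeasure (M' i) (A i))"
      using A gm by (intro prod.cong) (simp_all add: M'_def emeasure_density)
    finally show "emeasure (density (PiM I (\<lambda>_. M)) (\<lambda>y. ennreal (\<Prod>i\<in>I. g i (y i)))) (Pi\<^sub>E I A)
       = (\<Prod>i\<in>I. emeasure (M' i) (A i))" .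
  qed
  moreover have "PiM I (\<lambda>i. density M (\<lambda>y. ennreal (g i y))) = PiM I M'"
    by (rule PiM_cong) (auto simp: M'_def)
  ultimately show ?thesis by simp
qed

lemma powr_mult_powr_le_add:
  fixes u v \<alpha> :: real
  assumes "0 \<le> u" "0 \<le> v" "0 < \<alpha>" "\<alpha> < 1"
  shows "u powr \<alpha> * v powr (1 - \<alpha>) \<le> u + v"
proof -
  have "u powr \<alpha> * v powr (1 - \<alpha>) \<le> max u v powr \<alpha> * max u v powr (1 - \<alpha>)"
    using assms by (intro mult_mono powr_mono2) auto
  also have "\<dots> = max u v" using assms by (simp add: powr_add[symmetric])
  finally show ?thesis using assms by linarith
qed

lemma le_powr_mult_powr:
  fixes u v \<alpha> :: real
  assumes "0 \<le> u" "u \<le> v" "0 < \<alpha>" "\<alpha> < 1"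
  shows "u \<le> v powr \<alpha> * u powr (1 - \<alpha>)"
proof (cases "u = 0")
  case False
  then have "u = u powr \<alpha> * u powr (1 - \<alpha>)" using assms by (simp add: powr_add[symmetric])
  also have "\<dots> \<le> v powr \<alpha> * u powr (1 - \<alpha>)"
    using assms by (intro mult_right_mono powr_mono2) auto
  finally show ?thesis .
qed simp

text \<open>Chernoff: on the event L <= L' the density L is at most L'^alpha L^(1-alpha).\<close>
lemma emeasure_likelihood_test_le_prod_affinity:
  fixes g g' :: "'i \<Rightarrow> 'b \<Rightarrow> real"
  assumes fin: "finite I" and sf: "sigma_finite_measure \<mu>" and \<alpha>: "0 < \<alpha>" "\<alpha> < 1"
    and gm: "\<And>i. i \<in> I \<Longrightarrow> g i \<in> borel_measurable \<mu>"
    and gm': "\<And>i. i \<in> I \<Longrightarrow> g' i \<in> borel_measurable \<mu>"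
    and gn: "\<And>i y. i \<in> I \<Longrightarrow> 0 \<le> g i y"
  shows "emeasure (density (PiM I (\<lambda>_. \<mu>)) (\<lambda>y. ennreal (\<Prod>i\<in>I. g i (y i))))
           {y \<in> space (PiM I (\<lambda>_. \<mu>)). (\<Prod>i\<in>I. g i (y i)) \<le> (\<Prod>i\<in>I. g' i (y i))}
         \<le> (\<Prod>i\<in>I. \<integral>\<^sup>+ z. ennreal (g' i z powr \<alpha> * g i z powr (1 - \<alpha>)) \<partial>\<mu>)"
proof -
  let ?P = "PiM I (\<lambda>_. \<mu>)"
  let ?L = "\<lambda>y. \<Prod>i\<in>I. g i (y i)" and ?L' = "\<lambda>y. \<Prod>i\<in>I. g' i (y i)"
  let ?A = "{y \<in> space ?P. ?L y \<le> ?L' y}"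
  interpret product_sigma_finite "\<lambda>_. \<mu>"
    by (rule product_sigma_finite.intro) (rule sf)
  have [measurable]: "?L \<in> borel_measurable ?P" "?L' \<in> borel_measurable ?P"
    using borel_measurable_prod_components[OF fin] gm gm' by auto
  have "emeasure (density ?P (\<lambda>y. ennreal (?L y))) ?A = (\<integral>\<^sup>+ y. ennreal (?L y) * indicator ?A y \<partial>?P)"
    by (rule emeasure_density) measurable
  also have "\<dots> \<le> (\<integral>\<^sup>+ y. (\<Prod>i\<in>I. ennreal (g' i (y i) powr \<alpha> * g i (y i) powr (1 - \<alpha>))) \<partial>?P)"
  proof (rule nn_integral_mono)
    fix y
    have "?L y * indicator ?A y \<le> ?L' y powr \<alpha> * ?L y powr (1 - \<alpha>)"
      using le_powr_mult_powr[OF _ _ \<alpha>, of "?L y" "?L' y"] gn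
      by (auto simp: indicator_def intro: prod_nonneg)
    also have "\<dots> = (\<Prod>i\<in>I. g' i (y i) powr \<alpha> * g i (y i) powr (1 - \<alpha>))"
      by (simp add: prod_powr_distrib prod.distrib)
    finally have le: "?L y * indicator ?A y \<le> (\<Prod>i\<in>I. g' i (y i) powr \<alpha> * g i (y i) powr (1 - \<alpha>))" .
    have "ennreal (?L y) * indicator ?A y = ennreal (?L y * indicator ?A y)"
      by (simp add: indicator_def)
    also have "\<dots> \<le> ennreal (\<Prod>i\<in>I. g' i (y i) powr \<alpha> * g i (y i) powr (1 - \<alpha>))"
      using le by (rule ennreal_leI)
    also have "\<dots> = (\<Prod>i\<in>I. ennreal (g' i (y i) powr \<alpha> * g i (y i) powr (1 - \<alpha>)))"
      by (rule prod_ennreal[symmetric]) simp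
    finally show "ennreal (?L y) * indicator ?A y
        \<le> (\<Prod>i\<in>I. ennreal (g' i (y i) powr \<alpha> * g i (y i) powr (1 - \<alpha>)))" .
  qed
  also have "\<dots> = (\<Prod>i\<in>I. \<integral>\<^sup>+ z. ennreal (g' i z powr \<alpha> * g i z powr (1 - \<alpha>)) \<partial>\<mu>)"
    by (rule product_nn_integral_prod[OF fin]) (use gm gm' in measurable)
  finally show ?thesis .
qed

lemma prob_space_density_integral_eq_1:
  assumes fm: "f \<in> borel_measurable \<mu>" and fn: "\<And>y. 0 \<le> f y"
    and fp: "prob_space (density \<mu> (\<lambda>y. ennreal (f y)))"
  shows "integrable \<mu> f" "(\<integral>y. f y \<partial>\<mu>) = 1"
proof -
  have "(\<integral>\<^sup>+ y. ennreal (f y) \<partial>\<mu>) = (\<integral>\<^sup>+ y. ennreal (f y) * indicator (space \<mu>) y \<partial>\<mu>)"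
    by (rule nn_integral_cong) simp
  also have "\<dots> = emeasure (density \<mu> (\<lambda>y. ennreal (f y))) (space \<mu>)"
    using fm by (simp add: emeasure_density)
  also have "\<dots> = ennreal 1"
    using prob_space.emeasure_space_1[OF fp] by simp
  finally have "integrable \<mu> f \<and> integral\<^sup>L \<mu> f = 1"
    using nn_integral_eq_integrable[OF fm _ zero_le_one] fn by simp
  then show "integrable \<mu> f" "(\<integral>y. f y \<partial>\<mu>) = 1" by auto
qed

lemma
  fixes p q :: "'b \<Rightarrow> real"
  assumes \<alpha>: "0 < \<alpha>" "\<alpha> < 1"
    and pm: "p \<in> borel_measurable \<mu>" and pn: "\<And>y. 0 \<le> p y"
    and pp: "prob_space (density \<mu> (\<lambda>y. ennreal (p y)))"
    and qm: "q \<in> borel_measurable \<mu>" and qn: "\<And>y. 0 \<le> q y"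
    and qp: "prob_space (density \<mu> (\<lambda>y. ennreal (q y)))"
  shows nn_integral_hellinger_affinity:
      "(\<integral>\<^sup>+ y. ennreal (p y powr \<alpha> * q y powr (1 - \<alpha>)) \<partial>\<mu>)
         = ennreal (\<integral>y. p y powr \<alpha> * q y powr (1 - \<alpha>) \<partial>\<mu>)"
    and hellinger_affinity_nonneg: "0 \<le> (\<integral>y. p y powr \<alpha> * q y powr (1 - \<alpha>) \<partial>\<mu>)"
proof -
  have "integrable \<mu> (\<lambda>y. p y powr \<alpha> * q y powr (1 - \<alpha>))"
  proof (rule Bochner_Integration.integrable_bound)
    show "integrable \<mu> (\<lambda>y. p y + q y)"
      using prob_space_density_integral_eq_1(1) pm pn pp qm qn qp by auto
    show "AE y in \<mu>. norm (p y powr \<alpha> * q y powr (1 - \<alpha>)) \<le> norm (p y + q y)"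
      using powr_mult_powr_le_add[OF pn qn \<alpha>] pn qn by (simp add: add_nonneg_nonneg)
  qed (use pm qm in measurable)
  then show "(\<integral>\<^sup>+ y. ennreal (p y powr \<alpha> * q y powr (1 - \<alpha>)) \<partial>\<mu>)
      = ennreal (\<integral>y. p y powr \<alpha> * q y powr (1 - \<alpha>) \<partial>\<mu>)"
    by (simp add: nn_integral_eq_integral)
  show "0 \<le> (\<integral>y. p y powr \<alpha> * q y powr (1 - \<alpha>) \<partial>\<mu>)"
    by (rule Bochner_Integration.integral_nonneg) simp
qed

lemma hellinger_affinity_self:
  assumes pm: "p \<in> borel_measurable \<mu>" and pn: "\<And>y. 0 \<le> p y"
    and pp: "prob_space (density \<mu> (\<lambda>y. ennreal (p y)))"
  shows "(\<integral>y. p y powr \<alpha> * p y powr (1 - \<alpha>) \<partial>\<mu>) = 1"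
proof -
  have "p y powr \<alpha> * p y powr (1 - \<alpha>) = p y" for y
    using pn[of y] by (cases "p y = 0") (auto simp: powr_add[symmetric])
  then show ?thesis using prob_space_density_integral_eq_1(2)[OF pm pn pp] by simp
qed

lemma emeasure_likelihood_test_le_exp_disagreements:
  fixes \<mu> :: "'b measure" and f :: "nat \<Rightarrow> 'b \<Rightarrow> real" and a b :: "'e \<Rightarrow> nat"
  assumes fin: "finite E" and sf: "sigma_finite_measure \<mu>" and \<alpha>: "0 < \<alpha>" "\<alpha> < 1"
    and fm: "\<And>l. l < M \<Longrightarrow> f l \<in> borel_measurable \<mu>"
    and fn: "\<And>l y. l < M \<Longrightarrow> 0 \<le> f l y"
    and fp: "\<And>l. l < M \<Longrightarrow> prob_space (density \<mu> (\<lambda>y. ennreal (f l y)))"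
    and aM: "\<And>e. e \<in> E \<Longrightarrow> a e < M" and bM: "\<And>e. e \<in> E \<Longrightarrow> b e < M"
    and h: "\<And>l k. l < M \<Longrightarrow> k < M \<Longrightarrow> l \<noteq> k \<Longrightarrow> h \<le> (1 - \<alpha>) * hel \<mu> (f l) (f k) \<alpha>"
  shows "emeasure (density (PiM E (\<lambda>_. \<mu>)) (\<lambda>y. ennreal (\<Prod>e\<in>E. f (a e) (y e))))
           {y \<in> space (PiM E (\<lambda>_. \<mu>)). (\<Prod>e\<in>E. f (a e) (y e)) \<le> (\<Prod>e\<in>E. f (b e) (y e))}
         \<le> ennreal (exp (-h) ^ card {e\<in>E. a e \<noteq> b e})"
proof -
  let ?\<rho> = "\<lambda>e. \<integral>z. f (b e) z powr \<alpha> * f (a e) z powr (1 - \<alpha>) \<partial>\<mu>"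
  have \<rho>: "(\<integral>\<^sup>+ z. ennreal (f (b e) z powr \<alpha> * f (a e) z powr (1 - \<alpha>)) \<partial>\<mu>) = ennreal (?\<rho> e)"
    "0 \<le> ?\<rho> e" "?\<rho> e \<le> (if a e \<noteq> b e then exp (-h) else 1)" if e: "e \<in> E" for e
  proof -
    note fa = fm[OF aM[OF e]] fn[OF aM[OF e]] fp[OF aM[OF e]]
    note fb = fm[OF bM[OF e]] fn[OF bM[OF e]] fp[OF bM[OF e]]
    show "(\<integral>\<^sup>+ z. ennreal (f (b e) z powr \<alpha> * f (a e) z powr (1 - \<alpha>)) \<partial>\<mu>) = ennreal (?\<rho> e)"
      by (rule nn_integral_hellinger_affinity[OF \<alpha> fb fa])
    show "0 \<le> ?\<rho> e"
      by (rule hellinger_affinity_nonneg[OF \<alpha> fb fa])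
    show "?\<rho> e \<le> (if a e \<noteq> b e then exp (-h) else 1)"
    proof (cases "a e = b e")
      case True
      then show ?thesis using hellinger_affinity_self[OF fa] by simp
    next
      case False
      have "?\<rho> e = 1 - (1 - \<alpha>) * hel \<mu> (f (b e)) (f (a e)) \<alpha>"
        using \<alpha> by (simp add: hel_def)
      also have "\<dots> \<le> 1 - h" using h[OF bM[OF e] aM[OF e]] False by simp
      also have "\<dots> \<le> exp (-h)" using exp_ge_add_one_self[of "-h"] by simp
      finally show ?thesis using False by simp
    qed
  qed
  have "emeasure (density (PiM E (\<lambda>_. \<mu>)) (\<lambda>y. ennreal (\<Prod>e\<in>E. f (a e) (y e))))
           {y \<in> space (PiM E (\<lambda>_. \<mu>)). (\<Prod>e\<in>E. f (a e) (y e)) \<le> (\<Prod>e\<in>E. f (b e) (y e))}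
        \<le> (\<Prod>e\<in>E. \<integral>\<^sup>+ z. ennreal (f (b e) z powr \<alpha> * f (a e) z powr (1 - \<alpha>)) \<partial>\<mu>)"
    by (rule emeasure_likelihood_test_le_prod_affinity[OF fin sf \<alpha>]) (use fm fn aM bM in auto)
  also have "\<dots> = ennreal (\<Prod>e\<in>E. ?\<rho> e)"
    using \<rho>(1,2) by (simp add: prod_ennreal)
  also have "\<dots> \<le> ennreal (\<Prod>e\<in>E. if a e \<noteq> b e then exp (-h) else 1)"
    using \<rho> by (intro ennreal_leI prod_mono) auto
  also have "(\<Prod>e\<in>E. if a e \<noteq> b e then exp (-h) else 1) = exp (-h) ^ card {e\<in>E. a e \<noteq> b e}"
    by (simp add: prod.If_cases[OF fin] Int_def)
  finally show ?thesis .
qed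

definition nontrivial_subsets :: "'a set \<Rightarrow> 'a set set" where
  "nontrivial_subsets V = {S. S \<noteq> {} \<and> S \<subset> V}"

definition bichromatic :: "(nat \<times> nat) set \<Rightarrow> (nat \<Rightarrow> 'c) \<Rightarrow> nat" where
  "bichromatic E z = card {e\<in>E. z (fst e) \<noteq> z (snd e)}"

definition nonconstant_colourings :: "nat set \<Rightarrow> 'c set \<Rightarrow> (nat \<Rightarrow> 'c) set" where
  "nonconstant_colourings V C = {z \<in> V \<rightarrow>\<^sub>E C. \<forall>g\<in>C. \<exists>i\<in>V. z i \<noteq> g}"

lemma finite_nontrivial_subsets: "finite V \<Longrightarrow> finite (nontrivial_subsets V)"
  unfolding nontrivial_subsets_def by (rule finite_subset[of _ "Pow V"]) auto

lemma mincut_le_cut_size: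
  assumes "finite V" "S \<in> nontrivial_subsets V"
  shows "mincut V E \<le> cut_size E S"
proof -
  have "{cut_size E S | S. S \<noteq> {} \<and> S \<subset> V} \<subseteq> cut_size E ` Pow V" by auto
  then have "finite {cut_size E S | S. S \<noteq> {} \<and> S \<subset> V}"
    using assms(1) by (meson finite_Pow_iff finite_imageI finite_subset)
  then show ?thesis
    unfolding mincut_def by (rule Min_le) (use assms(2) in \<open>auto simp: nontrivial_subsets_def\<close>)
qed

lemma cut_size_le_card: "finite E \<Longrightarrow> cut_size E S \<le> card E"
  unfolding cut_size_def by (intro card_mono) auto

lemma finite_cut_nbhd: "finite V \<Longrightarrow> finite (cut_nbhd V E k)"
  unfolding cut_nbhd_def by (rule finite_subset[of _ "Pow V"]) auto

lemma card_cut_nbhd_bounds: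
  assumes "finite V"
  shows "1 \<le> card (cut_nbhd V E k)" "card (cut_nbhd V E k) \<le> 2 ^ card V"
proof -
  have sub: "cut_nbhd V E k \<subseteq> Pow V" by (auto simp: cut_nbhd_def)
  have "finite (cut_nbhd V E k)" using assms by (rule finite_cut_nbhd)
  moreover have "{} \<in> cut_nbhd V E k" by (simp add: cut_nbhd_def cut_size_def)
  ultimately show "1 \<le> card (cut_nbhd V E k)" by (metis card_0_eq empty_iff less_one not_le)
  show "card (cut_nbhd V E k) \<le> 2 ^ card V"
    using card_mono[OF _ sub] assms by (simp add: card_Pow)
qed

lemma tau_cut_k_bounds:
  assumes "finite V" "1 \<le> k"
  shows "0 \<le> tau_cut_k V E k" "tau_cut_k V E k \<le> 2 ^ card V"
proof -
  let ?c = "real (card (cut_nbhd V E (k * mincut V E)))"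
  have c: "1 \<le> ?c" "?c \<le> 2 ^ card V"
    using card_cut_nbhd_bounds[OF assms(1), of E "k * mincut V E"] by (simp_all add: of_nat_le_iff[symmetric])
  then have "0 \<le> ln ?c" "ln ?c \<le> 2 ^ card V"
    using ln_le_minus_one[of ?c] by (simp, linarith)
  moreover have "ln ?c / real k \<le> ln ?c"
    using \<open>0 \<le> ln ?c\<close> assms(2) by (simp add: divide_le_eq mult_le_cancel_left1)
  ultimately show "0 \<le> tau_cut_k V E k" "tau_cut_k V E k \<le> 2 ^ card V"
    unfolding tau_cut_k_def by auto
qed

lemma tau_cut_k_le_tau_cut:
  assumes "finite V" "1 \<le> k"
  shows "tau_cut_k V E k \<le> tau_cut V E"
  unfolding tau_cut_def using assms tau_cut_k_bounds(2)[OF assms(1)]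
  by (intro cSUP_upper bdd_aboveI[where M="2 ^ card V"]) auto

lemma tau_cut_nonneg: "finite V \<Longrightarrow> 0 \<le> tau_cut V E"
  using tau_cut_k_bounds(1)[of V 1 E] tau_cut_k_le_tau_cut[of V 1 E] by simp

lemma card_cut_nbhd_le_exp_tau_cut:
  assumes "finite V" "1 \<le> k"
  shows "real (card (cut_nbhd V E (k * mincut V E))) \<le> exp (real k * tau_cut V E)"
proof -
  let ?c = "real (card (cut_nbhd V E (k * mincut V E)))"
  have "ln ?c \<le> real k * tau_cut V E"
    using tau_cut_k_le_tau_cut[OF assms] assms(2) by (simp add: tau_cut_k_def divide_le_eq mult.commute)
  then have "exp (ln ?c) \<le> exp (real k * tau_cut V E)" by simp
  then show ?thesis
    using card_cut_nbhd_bounds(1)[OF assms(1), of E "k * mincut V E"] by simp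
qed

text \<open>Peeling: the nontrivial cuts of size in [k m, (k+1) m) lie in the cut neighbourhood of
  level (k+1) m, of cardinality at most exp((k+1) tau), and each contributes at most exp(-t k m).\<close>
lemma sum_exp_cut_size_le:
  fixes t :: real
  assumes finV: "finite V" and finE: "finite E" and m: "1 \<le> mincut V E"
    and t: "0 \<le> t" and \<tau>: "tau_cut V E \<le> t * mincut V E"
  shows "(\<Sum>S\<in>nontrivial_subsets V. exp (-t * cut_size E S))
           \<le> card E * exp (2 * tau_cut V E - t * mincut V E)"
proof -
  define m where "m = mincut V E"
  define \<tau> where "\<tau> = tau_cut V E"
  define level where "level S = cut_size E S div m" for S
  let ?Q = "nontrivial_subsets V"
  have level: "level ` ?Q \<subseteq> {1..card E}"
  proof
    fix k assume "k \<in> level ` ?Q"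
    then obtain S where S: "S \<in> ?Q" "k = level S" by auto
    have "1 \<le> k"
      using div_le_mono[OF mincut_le_cut_size[OF finV S(1), of E], of m] m by (simp add: S level_def m_def)
    moreover have "k \<le> card E"
      using cut_size_le_card[OF finE, of S] div_le_dividend[of "cut_size E S" m]
      unfolding S level_def by linarith
    ultimately show "k \<in> {1..card E}" by simp
  qed
  have "(\<Sum>S\<in>{S\<in>?Q. level S = k}. exp (-t * cut_size E S)) \<le> exp (2 * \<tau> - t * m)"
    if k: "1 \<le> k" for k
  proof -
    have "{S\<in>?Q. level S = k} \<subseteq> cut_nbhd V E ((k + 1) * m)"
    proof
      fix S assume S: "S \<in> {S\<in>?Q. level S = k}"
      have "cut_size E S mod m < m" using m by (simp add: m_def)
      then have "cut_size E S < (cut_size E S div m + 1) * m"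
        using div_mult_mod_eq[of "cut_size E S" m] by (simp only: distrib_right)
      then show "S \<in> cut_nbhd V E ((k + 1) * m)"
        using S by (auto simp: cut_nbhd_def nontrivial_subsets_def level_def)
    qed
    then have "card {S\<in>?Q. level S = k} \<le> card (cut_nbhd V E ((k + 1) * m))"
      by (intro card_mono finite_cut_nbhd finV)
    then have card_le: "real (card {S\<in>?Q. level S = k}) \<le> exp (real (k + 1) * \<tau>)"
      using card_cut_nbhd_le_exp_tau_cut[OF finV, of "k + 1" E] by (simp add: m_def \<tau>_def)
    have term_le: "exp (-t * cut_size E S) \<le> exp (-t * (k * m))" if "S \<in> {S\<in>?Q. level S = k}" for S
    proof -
      have "k * m \<le> cut_size E S"
        using that div_mult_mod_eq[of "cut_size E S" m] by (simp add: level_def)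
      then have "real k * real m \<le> real (cut_size E S)" by (simp flip: of_nat_mult)
      then show ?thesis using t by (simp add: mult_left_mono)
    qed
    have "(\<Sum>S\<in>{S\<in>?Q. level S = k}. exp (-t * cut_size E S))
        \<le> real (card {S\<in>?Q. level S = k}) * exp (-t * (k * m))"
      using term_le by (rule sum_bounded_above)
    also have "\<dots> \<le> exp (real (k + 1) * \<tau>) * exp (-t * (k * m))"
      using card_le by (rule mult_right_mono) simp
    also have "\<dots> \<le> exp (2 * \<tau> - t * m)"
    proof -
      have "(real k - 1) * \<tau> \<le> (real k - 1) * (t * m)"
        using k \<tau> by (intro mult_left_mono) (auto simp: \<tau>_def m_def)
      then show ?thesis by (simp add: exp_add[symmetric] algebra_simps)
    qed
    finally show ?thesis .
  qed
  then have "(\<Sum>S\<in>?Q. exp (-t * cut_size E S)) \<le> (\<Sum>k\<in>{1..card E}. exp (2 * \<tau> - t * m))"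
    unfolding sum.group[OF finite_nontrivial_subsets[OF finV] finite_atLeastAtMost level, symmetric]
    by (intro sum_mono) auto
  then show ?thesis by (simp add: m_def \<tau>_def)
qed

lemma sum_cut_size_colour_classes_le:
  fixes z :: "nat \<Rightarrow> 'c"
  assumes finC: "finite C" and finE: "finite E"
    and EV: "\<And>e. e \<in> E \<Longrightarrow> fst e \<in> V \<and> snd e \<in> V"
  shows "(\<Sum>g\<in>C. cut_size E {i\<in>V. z i = g}) \<le> 2 * bichromatic E z"
proof -
  have "cut_size E {i\<in>V. z i = g} = card {e\<in>E. (z (fst e) = g) \<noteq> (z (snd e) = g)}" for g
    unfolding cut_size_def using EV by (intro arg_cong[where f=card]) auto
  then have "(\<Sum>g\<in>C. cut_size E {i\<in>V. z i = g})
      = (\<Sum>g\<in>C. \<Sum>e\<in>E. if (z (fst e) = g) \<noteq> (z (snd e) = g) then 1 else 0)"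
    by (simp add: sum.inter_filter[OF finE, symmetric])
  also have "\<dots> = (\<Sum>e\<in>E. card {g\<in>C. (z (fst e) = g) \<noteq> (z (snd e) = g)})"
    by (subst sum.swap) (simp only: sum.inter_filter[OF finC, symmetric] card_eq_sum)
  also have "\<dots> \<le> (\<Sum>e\<in>E. if z (fst e) \<noteq> z (snd e) then 2 else 0)"
  proof (rule sum_mono)
    fix e
    show "card {g\<in>C. (z (fst e) = g) \<noteq> (z (snd e) = g)} \<le> (if z (fst e) \<noteq> z (snd e) then 2 else 0)"
    proof (cases "z (fst e) = z (snd e)")
      case False
      have "card {g\<in>C. (z (fst e) = g) \<noteq> (z (snd e) = g)} \<le> card {z (fst e), z (snd e)}"
        by (rule card_mono) auto
      then show ?thesis using False by (simp add: card_insert_if)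
    qed simp
  qed
  also have "\<dots> = 2 * bichromatic E z"
    by (simp add: bichromatic_def sum.If_cases[OF finE] Int_def)
  finally show ?thesis .
qed

text \<open>A nonconstant colouring is determined by its colour classes, each of which is empty or a
  nontrivial subset; not all classes are empty.  Expanding the product over the colours of
  (1 + the sum over nontrivial subsets) therefore dominates the sum over colourings.\<close>
lemma sum_exp_bichromatic_le:
  fixes t :: real and C :: "'c set"
  assumes finV: "finite V" and V: "V \<noteq> {}" and finC: "finite C" and finE: "finite E"
    and EV: "\<And>e. e \<in> E \<Longrightarrow> fst e \<in> V \<and> snd e \<in> V" and t: "0 \<le> t"
  shows "(\<Sum>z\<in>nonconstant_colourings V C. exp (-2 * t * bichromatic E z))
           \<le> (1 + (\<Sum>S\<in>nontrivial_subsets V. exp (-t * cut_size E S))) ^ card C - 1"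
proof -
  define \<phi> where "\<phi> S = exp (-t * cut_size E S)" for S
  define P where "P = insert {} (nontrivial_subsets V)"
  define colour_classes where "colour_classes z = restrict (\<lambda>g. {i\<in>V. z i = g}) C" for z :: "nat \<Rightarrow> 'c"
  define no_classes where "no_classes = restrict (\<lambda>_. {} :: nat set) C"
  let ?Z = "nonconstant_colourings V C"
  have finP: "finite P" using finite_nontrivial_subsets[OF finV] by (simp add: P_def)
  have finPi: "finite (C \<rightarrow>\<^sub>E P)" using finC finP by (rule finite_PiE)
  have \<phi>_empty: "\<phi> {} = 1" by (simp add: \<phi>_def cut_size_def)
  have bound: "exp (-2 * t * bichromatic E z) \<le> (\<Prod>g\<in>C. \<phi> (colour_classes z g))" for z
  proof -
    have "(\<Prod>g\<in>C. \<phi> (colour_classes z g)) = exp (-t * (\<Sum>g\<in>C. cut_size E {i\<in>V. z i = g}))"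
      by (simp add: \<phi>_def colour_classes_def exp_sum[OF finC, symmetric] sum_distrib_left)
    moreover have "real (\<Sum>g\<in>C. cut_size E {i\<in>V. z i = g}) \<le> 2 * real (bichromatic E z)"
      using sum_cut_size_colour_classes_le[OF finC finE EV, of z] by linarith
    ultimately show ?thesis using mult_left_mono[OF _ t] by fastforce
  qed
  have inj: "inj_on colour_classes ?Z"
  proof (rule inj_onI)
    fix z z' assume z: "z \<in> ?Z" and z': "z' \<in> ?Z" and eq: "colour_classes z = colour_classes z'"
    show "z = z'"
    proof (rule extensionalityI)
      show "z \<in> extensional V" "z' \<in> extensional V"
        using z z' by (auto simp: nonconstant_colourings_def PiE_def)
    next
      fix i assume i: "i \<in> V"
      then have "z i \<in> C" using z by (auto simp: nonconstant_colourings_def)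
      then have "i \<in> colour_classes z' (z i)" using i eq[symmetric] by (simp add: colour_classes_def)
      then show "z i = z' i" using \<open>z i \<in> C\<close> by (simp add: colour_classes_def)
    qed
  qed
  have colour_classes_in: "colour_classes z \<in> (C \<rightarrow>\<^sub>E P) - {no_classes}" if z: "z \<in> ?Z" for z
  proof
    show "colour_classes z \<in> C \<rightarrow>\<^sub>E P"
      using z by (auto simp: colour_classes_def P_def nontrivial_subsets_def nonconstant_colourings_def)
    obtain i where i: "i \<in> V" using V by auto
    then have "i \<in> colour_classes z (z i)" "z i \<in> C"
      using z by (auto simp: colour_classes_def nonconstant_colourings_def)
    then show "colour_classes z \<notin> {no_classes}" by (auto simp: no_classes_def)
  qed
  have "(\<Sum>z\<in>?Z. exp (-2 * t * bichromatic E z)) \<le> (\<Sum>z\<in>?Z. \<Prod>g\<in>C. \<phi> (colour_classes z g))"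
    by (intro sum_mono bound)
  also have "\<dots> = (\<Sum>T\<in>colour_classes ` ?Z. \<Prod>g\<in>C. \<phi> (T g))"
    by (rule sum.reindex[OF inj, symmetric, unfolded comp_def])
  also have "\<dots> \<le> (\<Sum>T\<in>(C \<rightarrow>\<^sub>E P) - {no_classes}. \<Prod>g\<in>C. \<phi> (T g))"
    using finPi colour_classes_in by (intro sum_mono2 image_subsetI) (auto simp: \<phi>_def intro: prod_nonneg)
  also have "\<dots> = (\<Sum>T\<in>C \<rightarrow>\<^sub>E P. \<Prod>g\<in>C. \<phi> (T g)) - 1"
    using finPi by (subst sum_diff1) (auto simp: no_classes_def P_def \<phi>_empty)
  also have "(\<Sum>T\<in>C \<rightarrow>\<^sub>E P. \<Prod>g\<in>C. \<phi> (T g)) = (\<Sum>S\<in>P. \<phi> S) ^ card C"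
    using prod_sum_PiE[OF finC, of "\<lambda>_. P" "\<lambda>_. \<phi>"] finP by simp
  also have "(\<Sum>S\<in>P. \<phi> S) = 1 + (\<Sum>S\<in>nontrivial_subsets V. exp (-t * cut_size E S))"
    using finite_nontrivial_subsets[OF finV] \<phi>_empty
    by (simp add: P_def nontrivial_subsets_def) (simp add: \<phi>_def)
  finally show ?thesis .
qed

lemma sum_exp_bichromatic_le_1:
  fixes t :: real and C :: "'c set"
  assumes finV: "finite V" and V: "V \<noteq> {}" and finC: "finite C" and C: "C \<noteq> {}"
    and EV: "E \<subseteq> V \<times> V"
    and t: "8 * tau_cut V E + 7 * ln (2 * real (card V)) + 4 * ln (real (card C)) \<le> t * mincut V E"
  shows "(\<Sum>z\<in>nonconstant_colourings V C. exp (-t * bichromatic E z)) \<le> 1"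
proof -
  define N where "N = real (card V)"
  define K where "K = real (card C)"
  define \<tau> where "\<tau> = tau_cut V E"
  define m where "m = real (mincut V E)"
  define \<Phi> where "\<Phi> = (\<Sum>S\<in>nontrivial_subsets V. exp (-(t / 2) * cut_size E S))"
  have N: "1 \<le> N" using finV V by (simp add: N_def Suc_le_eq card_gt_0_iff)
  have K: "1 \<le> K" using finC C by (simp add: K_def Suc_le_eq card_gt_0_iff)
  have \<tau>: "0 \<le> \<tau>" unfolding \<tau>_def by (rule tau_cut_nonneg[OF finV])
  have logs: "0 < ln (2 * N)" "0 \<le> ln K" using N K by simp_all
  then have tm: "8 * \<tau> + 7 * ln (2 * N) + 4 * ln K \<le> t * m" "0 < t * m"
    using t \<tau> by (simp_all add: N_def K_def \<tau>_def m_def)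
  then have m: "1 \<le> mincut V E" and t2: "0 \<le> t / 2"
    by (auto simp: m_def zero_less_mult_iff)
  have finE: "finite E" using finite_subset[OF EV] finV by blast
  have cardE: "real (card E) \<le> N ^ 2"
    using card_mono[OF _ EV] finV by (simp add: N_def card_cartesian_product power2_eq_square flip: of_nat_mult)
  have "\<Phi> \<le> card E * exp (2 * \<tau> - t / 2 * m)"
    unfolding \<Phi>_def \<tau>_def m_def
    using tm \<tau> logs by (intro sum_exp_cut_size_le[OF finV finE m]) (use t2 in \<open>auto simp: \<tau>_def m_def\<close>)
  also have "\<dots> \<le> N ^ 2 * exp (- (3 * ln (2 * N) + 2 * ln K))"
    using tm \<tau> logs cardE by (intro mult_mono) auto
  also have "exp (- (3 * ln (2 * N) + 2 * ln K)) = 1 / ((2 * N) ^ 3 * K ^ 2)"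
  proof -
    have "exp (3 * ln (2 * N) + 2 * ln K) = (2 * N) ^ 3 * K ^ 2"
      using exp_of_nat_mult[of 3 "ln (2 * N)"] exp_of_nat_mult[of 2 "ln K"] N K by (simp add: exp_add)
    then show ?thesis by (metis exp_minus inverse_eq_divide)
  qed
  finally have "K * \<Phi> \<le> 1 / (8 * N * K)"
    using N K by (simp add: field_simps power2_eq_square power3_eq_cube)
  also have "\<dots> \<le> 1 / 8" using N K mult_mono[OF K N] by (simp add: field_simps)
  finally have K\<Phi>: "K * \<Phi> \<le> 1 / 8" .
  have \<Phi>: "0 \<le> \<Phi>" unfolding \<Phi>_def by (intro sum_nonneg) simp
  have "(\<Sum>z\<in>nonconstant_colourings V C. exp (-t * bichromatic E z)) \<le> (1 + \<Phi>) ^ card C - 1"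
    using sum_exp_bichromatic_le[OF finV V finC finE _ t2] EV by (auto simp: \<Phi>_def subset_iff)
  also have "(1 + \<Phi>) ^ card C \<le> exp \<Phi> ^ card C"
    using \<Phi> by (intro power_mono) (auto simp: add.commute)
  also have "\<dots> = exp (K * \<Phi>)" by (simp add: K_def exp_of_nat_mult)
  also have "exp (K * \<Phi>) \<le> 1 + 2 * (K * \<Phi>)"
    using exp_bound_lemma[of "K * \<Phi>"] K\<Phi> K \<Phi> by simp
  finally show ?thesis using K\<Phi> by simp
qed

lemma mincut_le_bichromatic:
  assumes finV: "finite V" and V: "V \<noteq> {}" and finE: "finite E"
    and EV: "\<And>e. e \<in> E \<Longrightarrow> fst e \<in> V \<and> snd e \<in> V"
    and z: "z \<in> nonconstant_colourings V C"
  shows "mincut V E \<le> bichromatic E z"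
proof -
  obtain i where i: "i \<in> V" "z i \<in> C"
    using z V by (auto simp: nonconstant_colourings_def)
  then obtain j where "j \<in> V" "z j \<noteq> z i"
    using z by (auto simp: nonconstant_colourings_def)
  then have S: "{k\<in>V. z k = z i} \<in> nontrivial_subsets V"
    using i by (auto simp: nontrivial_subsets_def)
  have "mincut V E \<le> cut_size E {k\<in>V. z k = z i}"
    by (rule mincut_le_cut_size[OF finV S])
  also have "\<dots> \<le> bichromatic E z"
    unfolding cut_size_def bichromatic_def using finE EV by (intro card_mono) auto
  finally show ?thesis .
qed

definition edge_disagreements :: "nat monoid \<Rightarrow> (nat \<times> nat) set \<Rightarrow> (nat \<Rightarrow> nat) \<Rightarrow> (nat \<Rightarrow> nat) \<Rightarrow> nat" where
  "edge_disagreements G E w x =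
     card {e\<in>E. gdiff G (w (fst e)) (w (snd e)) \<noteq> gdiff G (x (fst e)) (x (snd e))}"

definition relabel :: "nat monoid \<Rightarrow> nat set \<Rightarrow> (nat \<Rightarrow> nat) \<Rightarrow> (nat \<Rightarrow> nat) \<Rightarrow> nat \<Rightarrow> nat" where
  "relabel G V x w = restrict (\<lambda>i. inv\<^bsub>G\<^esub> (x i) \<otimes>\<^bsub>G\<^esub> w i) V"

lemma (in group) mult_inv_eq_iff_inv_mult_eq:
  assumes "p \<in> carrier G" "q \<in> carrier G" "u \<in> carrier G" "v \<in> carrier G"
  shows "u \<otimes> inv v = p \<otimes> inv q \<longleftrightarrow> inv p \<otimes> u = inv q \<otimes> v"
proof
  assume h: "u \<otimes> inv v = p \<otimes> inv q"
  have "inv p \<otimes> u = inv p \<otimes> (u \<otimes> inv v) \<otimes> v" using assms by (simp add: m_assoc)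
  also have "\<dots> = inv q \<otimes> v" using assms by (simp add: h m_assoc[symmetric])
  finally show "inv p \<otimes> u = inv q \<otimes> v" .
next
  assume h: "inv p \<otimes> u = inv q \<otimes> v"
  have "u \<otimes> inv v = p \<otimes> (inv p \<otimes> u) \<otimes> inv v" using assms by (simp add: m_assoc[symmetric])
  also have "\<dots> = p \<otimes> inv q" using assms by (simp add: h m_assoc)
  finally show "u \<otimes> inv v = p \<otimes> inv q" .
qed

lemma relabel_in_PiE:
  assumes "group G" "x \<in> V \<rightarrow>\<^sub>E carrier G" "w \<in> V \<rightarrow>\<^sub>E carrier G"
  shows "relabel G V x w \<in> V \<rightarrow>\<^sub>E carrier G"
proof -
  interpret group G by fact
  show ?thesis using assms by (auto simp: relabel_def)
qed

lemma inj_on_relabel: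
  assumes "group G" and x: "x \<in> V \<rightarrow>\<^sub>E carrier G"
  shows "inj_on (relabel G V x) (V \<rightarrow>\<^sub>E carrier G)"
proof -
  interpret group G by fact
  show ?thesis
  proof (rule inj_onI)
    fix w w' assume w: "w \<in> V \<rightarrow>\<^sub>E carrier G" and w': "w' \<in> V \<rightarrow>\<^sub>E carrier G"
      and eq: "relabel G V x w = relabel G V x w'"
    show "w = w'"
    proof (rule extensionalityI)
      show "w \<in> extensional V" "w' \<in> extensional V" using w w' by (auto simp: PiE_def)
    next
      fix i assume i: "i \<in> V"
      then have "inv\<^bsub>G\<^esub> (x i) \<otimes>\<^bsub>G\<^esub> w i = inv\<^bsub>G\<^esub> (x i) \<otimes>\<^bsub>G\<^esub> w' i"
        using fun_cong[OF eq, of i] by (simp add: relabel_def)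
      then show "w i = w' i" using i w w' x by (metis PiE_mem Units_eq Units_l_cancel inv_closed)
    qed
  qed
qed

lemma edge_disagreements_eq_bichromatic:
  assumes "group G" and x: "x \<in> V \<rightarrow>\<^sub>E carrier G" and w: "w \<in> V \<rightarrow>\<^sub>E carrier G"
    and EV: "\<And>e. e \<in> E \<Longrightarrow> fst e \<in> V \<and> snd e \<in> V"
  shows "edge_disagreements G E w x = bichromatic E (relabel G V x w)"
proof -
  interpret group G by fact
  have "gdiff G (w (fst e)) (w (snd e)) \<noteq> gdiff G (x (fst e)) (x (snd e))
      \<longleftrightarrow> relabel G V x w (fst e) \<noteq> relabel G V x w (snd e)" if "e \<in> E" for e
    using that EV[OF that] mult_inv_eq_iff_inv_mult_eq[of "x (fst e)" "x (snd e)" "w (fst e)" "w (snd e)"] w x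
    by (auto simp: gdiff_def relabel_def)
  then show ?thesis
    unfolding edge_disagreements_def bichromatic_def
    by (intro arg_cong[where f=card] Collect_cong) blast
qed

lemma relabel_nonconstant:
  assumes "group G" and x: "x \<in> V \<rightarrow>\<^sub>E carrier G" and w: "w \<in> V \<rightarrow>\<^sub>E carrier G"
    and nd: "\<not> dist_zero G V w x"
  shows "relabel G V x w \<in> nonconstant_colourings V (carrier G)"
proof -
  interpret group G by fact
  have "\<exists>i\<in>V. relabel G V x w i \<noteq> g" if g: "g \<in> carrier G" for g
  proof (rule ccontr)
    assume "\<not> (\<exists>i\<in>V. relabel G V x w i \<noteq> g)"
    then have "w i = x i \<otimes>\<^bsub>G\<^esub> g" if "i \<in> V" for i
      using inv_solve_left[of g "x i" "w i"] that w x g by (auto simp: relabel_def)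
    then have "w = shift G V x g"
      using w by (intro extensionalityI[of _ V]) (auto simp: shift_def PiE_def)
    then show False using g nd by (auto simp: dist_zero_def)
  qed
  then show ?thesis using relabel_in_PiE[OF assms(1-3)] by (simp add: nonconstant_colourings_def)
qed

lemma sum_exp_edge_disagreements_le_1:
  fixes t :: real
  assumes grp: "group G" and finG: "finite (carrier G)" and x: "x \<in> V \<rightarrow>\<^sub>E carrier G"
    and finV: "finite V" and V: "V \<noteq> {}" and EV: "E \<subseteq> V \<times> V"
    and t: "8 * tau_cut V E + 7 * ln (2 * real (card V)) + 4 * ln (real (card (carrier G))) \<le> t * mincut V E"
  shows "(\<Sum>w\<in>{w \<in> V \<rightarrow>\<^sub>E carrier G. \<not> dist_zero G V w x}. exp (-t * edge_disagreements G E w x)) \<le> 1"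
proof -
  let ?W = "{w \<in> V \<rightarrow>\<^sub>E carrier G. \<not> dist_zero G V w x}"
  have EV': "\<And>e. e \<in> E \<Longrightarrow> fst e \<in> V \<and> snd e \<in> V" using EV by auto
  have "(\<Sum>w\<in>?W. exp (-t * edge_disagreements G E w x))
      = (\<Sum>w\<in>?W. exp (-t * bichromatic E (relabel G V x w)))"
    using edge_disagreements_eq_bichromatic[OF grp x _ EV'] by simp
  also have "\<dots> = (\<Sum>z\<in>relabel G V x ` ?W. exp (-t * bichromatic E z))"
    using inj_on_subset[OF inj_on_relabel[OF grp x]] by (subst sum.reindex) auto
  also have "\<dots> \<le> (\<Sum>z\<in>nonconstant_colourings V (carrier G). exp (-t * bichromatic E z))"
  proof (rule sum_mono2)
    show "finite (nonconstant_colourings V (carrier G))"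
      using finite_PiE[OF finV, of "\<lambda>_. carrier G"] finG
      by (auto simp: nonconstant_colourings_def intro: finite_subset)
    show "relabel G V x ` ?W \<subseteq> nonconstant_colourings V (carrier G)"
      using relabel_nonconstant[OF grp x] by auto
  qed simp
  also have "\<dots> \<le> 1"
    using sum_exp_bichromatic_le_1[OF finV V finG _ EV t] group.is_monoid[OF grp]
    by (auto intro: monoid.one_closed)
  finally show ?thesis .
qed

lemma exp_power_le_exp_mult_exp:
  fixes h c :: real and d m :: nat
  assumes "0 < m" "m \<le> d" "0 \<le> c"
  shows "exp (-h) ^ d \<le> exp (-c) * exp (-(h - c / m) * d)"
proof -
  have "c \<le> c / m * d" using assms by (simp add: field_simps mult_left_mono)
  then have "-h * d \<le> -c + -(h - c / m) * d" by (simp add: algebra_simps)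
  then show ?thesis by (simp add: exp_of_nat_mult[symmetric] mult.commute flip: exp_add)
qed

text \<open>A wrong labelling disagrees with x on at least mincut edges, so the surplus c of the
  exponent per mincut edges can be pulled out of every term.\<close>
lemma sum_exp_power_edge_disagreements_le:
  fixes h c :: real
  assumes grp: "group G" and finG: "finite (carrier G)" and x: "x \<in> V \<rightarrow>\<^sub>E carrier G"
    and finV: "finite V" and V: "V \<noteq> {}" and EV: "E \<subseteq> V \<times> V" and c: "0 \<le> c"
    and h: "8 * tau_cut V E + 7 * ln (2 * real (card V)) + 4 * ln (real (card (carrier G))) + c \<le> h * mincut V E"
  shows "(\<Sum>w\<in>{w \<in> V \<rightarrow>\<^sub>E carrier G. \<not> dist_zero G V w x}. exp (-h) ^ edge_disagreements G E w x)
           \<le> exp (-c)"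
proof -
  let ?W = "{w \<in> V \<rightarrow>\<^sub>E carrier G. \<not> dist_zero G V w x}"
  let ?m = "mincut V E"
  have EV': "\<And>e. e \<in> E \<Longrightarrow> fst e \<in> V \<and> snd e \<in> V" using EV by auto
  have finE: "finite E" using finite_subset[OF EV] finV by blast
  have "1 \<le> card (carrier G)"
    using finG group.is_monoid[OF grp] monoid.one_closed by (fastforce simp: Suc_le_eq card_gt_0_iff)
  moreover have "1 \<le> card V" using finV V by (simp add: Suc_le_eq card_gt_0_iff)
  ultimately have pos: "0 \<le> tau_cut V E" "0 < ln (2 * card V)" "0 \<le> ln (card (carrier G))"
    using tau_cut_nonneg[OF finV] by auto
  then have m: "0 < ?m" using h c by (cases "?m = 0") auto
  have "(\<Sum>w\<in>?W. exp (-h) ^ edge_disagreements G E w x)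
      \<le> (\<Sum>w\<in>?W. exp (-c) * exp (-(h - c / ?m) * edge_disagreements G E w x))"
  proof (rule sum_mono)
    fix w assume w: "w \<in> ?W"
    then have "?m \<le> edge_disagreements G E w x"
      using mincut_le_bichromatic[OF finV V finE EV' relabel_nonconstant[OF grp x]]
        edge_disagreements_eq_bichromatic[OF grp x _ EV'] by auto
    then show "exp (-h) ^ edge_disagreements G E w x
        \<le> exp (-c) * exp (-(h - c / ?m) * edge_disagreements G E w x)"
      by (rule exp_power_le_exp_mult_exp[OF m _ c])
  qed
  also have "\<dots> \<le> exp (-c) * 1"
    unfolding sum_distrib_left[symmetric]
    using h m by (intro mult_left_mono sum_exp_edge_disagreements_le_1[OF grp finG x finV V EV])
      (auto simp: algebra_simps)
  finally show ?thesis by simp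
qed

lemma gdiff_less:
  assumes "group G" "carrier G = {..<M}" "a \<in> carrier G" "b \<in> carrier G"
  shows "gdiff G a b < M"
proof -
  interpret group G by fact
  have "gdiff G a b \<in> carrier G" using assms(3,4) by (simp add: gdiff_def)
  then show ?thesis using assms(2) by simp
qed

text \<open>Union bound over the wrong labellings that the ML rule may prefer, each handled by
  the Chernoff bound for the corresponding likelihood-ratio test.\<close>
lemma measure_ml_error_le:
  fixes \<mu> :: "'b measure" and f :: "nat \<Rightarrow> 'b \<Rightarrow> real" and h :: real
  assumes grp: "group G" and carr: "carrier G = {..<M}" and finV: "finite V" and EV: "E \<subseteq> V \<times> V"
    and sf: "sigma_finite_measure \<mu>"
    and f_meas: "\<And>l. l < M \<Longrightarrow> f l \<in> borel_measurable \<mu>"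
    and f_nonneg: "\<And>l y. l < M \<Longrightarrow> 0 \<le> f l y"
    and f_prob: "\<And>l. l < M \<Longrightarrow> prob_space (density \<mu> (\<lambda>y. ennreal (f l y)))"
    and psi_ml: "is_ml_rule G \<mu> f V E \<psi>" and x: "x \<in> V \<rightarrow>\<^sub>E carrier G"
    and \<alpha>: "0 < \<alpha>" "\<alpha> < 1"
    and h: "\<And>l k. l < M \<Longrightarrow> k < M \<Longrightarrow> l \<noteq> k \<Longrightarrow> h \<le> (1 - \<alpha>) * hel \<mu> (f l) (f k) \<alpha>"
  shows "measure (obs_measure G \<mu> f E x) {y \<in> space (obs_measure G \<mu> f E x). \<not> dist_zero G V (\<psi> y) x}
           \<le> (\<Sum>w\<in>{w \<in> V \<rightarrow>\<^sub>E carrier G. \<not> dist_zero G V w x}. exp (-h) ^ edge_disagreements G E w x)"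
proof -
  let ?P = "PiM E (\<lambda>_. \<mu>)"
  let ?W = "{w \<in> V \<rightarrow>\<^sub>E carrier G. \<not> dist_zero G V w x}"
  define a where "a w e = gdiff G (w (fst e)) (w (snd e))" for w :: "nat \<Rightarrow> nat" and e :: "nat \<times> nat"
  define beats where "beats w = {y \<in> space ?P. likelihood G f E x y \<le> likelihood G f E w y}" for w
  have finE: "finite E" using finite_subset[OF EV] finV by blast
  have a: "a w e < M" if "w \<in> V \<rightarrow>\<^sub>E carrier G" "e \<in> E" for w e
  proof -
    have "w (fst e) \<in> carrier G" "w (snd e) \<in> carrier G" using that EV by (cases e, auto)+
    then show ?thesis unfolding a_def by (rule gdiff_less[OF grp carr])
  qed
  have lik: "likelihood G f E w = (\<lambda>y. \<Prod>e\<in>E. f (a w e) (y e))" for w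
    by (simp add: likelihood_def a_def fun_eq_iff)
  have obs: "obs_measure G \<mu> f E x = density ?P (\<lambda>y. ennreal (likelihood G f E x y))"
    unfolding obs_measure_def lik a_def[symmetric]
    by (rule PiM_density_eq_density_prod[OF finE sf]) (use a[OF x] f_meas f_nonneg f_prob in auto)
  have beats_sets: "beats w \<in> sets ?P" if "w \<in> V \<rightarrow>\<^sub>E carrier G" for w
    unfolding beats_def lik
    using borel_measurable_prod_components[OF finE, of "\<lambda>e. f (a x e)" \<mu>]
      borel_measurable_prod_components[OF finE, of "\<lambda>e. f (a w e)" \<mu>]
      f_meas a[OF x] a[OF that] by measurable
  have "finite (V \<rightarrow>\<^sub>E carrier G)" using finV carr by (intro finite_PiE) simp_all
  then have finW: "finite ?W" by simp
  have "{y \<in> space (obs_measure G \<mu> f E x). \<not> dist_zero G V (\<psi> y) x} \<subseteq> (\<Union>w\<in>?W. beats w)"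
  proof
    fix y assume "y \<in> {y \<in> space (obs_measure G \<mu> f E x). \<not> dist_zero G V (\<psi> y) x}"
    then have "y \<in> space ?P" "\<not> dist_zero G V (\<psi> y) x" by (simp_all add: obs)
    then have "\<psi> y \<in> ?W" "y \<in> beats (\<psi> y)"
      using psi_ml x by (simp_all add: is_ml_rule_def beats_def)
    then show "y \<in> (\<Union>w\<in>?W. beats w)" by blast
  qed
  then have "emeasure (obs_measure G \<mu> f E x) {y \<in> space (obs_measure G \<mu> f E x). \<not> dist_zero G V (\<psi> y) x}
      \<le> emeasure (obs_measure G \<mu> f E x) (\<Union>w\<in>?W. beats w)"
    by (rule emeasure_mono) (use beats_sets finW in \<open>auto simp: obs intro!: sets.finite_UN\<close>)
  also have "\<dots> \<le> (\<Sum>w\<in>?W. emeasure (obs_measure G \<mu> f E x) (beats w))"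
    by (rule emeasure_subadditive_finite[OF finW]) (use beats_sets in \<open>auto simp: obs\<close>)
  also have "\<dots> \<le> (\<Sum>w\<in>?W. ennreal (exp (-h) ^ edge_disagreements G E w x))"
  proof (rule sum_mono)
    fix w assume "w \<in> ?W"
    then have w: "w \<in> V \<rightarrow>\<^sub>E carrier G" by simp
    have "edge_disagreements G E w x = card {e\<in>E. a x e \<noteq> a w e}"
      unfolding edge_disagreements_def a_def by (intro arg_cong[where f=card] Collect_cong) auto
    then show "emeasure (obs_measure G \<mu> f E x) (beats w) \<le> ennreal (exp (-h) ^ edge_disagreements G E w x)"
      unfolding obs beats_def lik
      using emeasure_likelihood_test_le_exp_disagreements[OF finE sf \<alpha> f_meas f_nonneg f_prob
          a[OF x] a[OF w] h] by simp
  qed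
  also have "\<dots> = ennreal (\<Sum>w\<in>?W. exp (-h) ^ edge_disagreements G E w x)"
    by (rule sum_ennreal) simp
  finally show ?thesis
    unfolding measure_def by (intro enn2real_leI) (auto intro: sum_nonneg)
qed

lemma hel_min_le:
  assumes "l < M" "k < M" "l \<noteq> k"
  shows "hel_min \<mu> f M \<alpha> \<le> hel \<mu> (f l) (f k) \<alpha>"
proof -
  have "{hel \<mu> (f l) (f k) \<alpha> | l k. l < M \<and> k < M \<and> l \<noteq> k}
      \<subseteq> (\<lambda>(l, k). hel \<mu> (f l) (f k) \<alpha>) ` ({..<M} \<times> {..<M})"
    by auto
  then have "finite {hel \<mu> (f l) (f k) \<alpha> | l k. l < M \<and> k < M \<and> l \<noteq> k}"
    by (rule finite_subset) simp
  then show ?thesis unfolding hel_min_def by (rule Min_le) (use assms in auto)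
qed

lemma bdd_above_hel_min:
  assumes "2 \<le> M"
  shows "bdd_above ((\<lambda>\<alpha>. (1 - \<alpha>) * hel_min \<mu> f M \<alpha>) ` {0<..<1})"
proof (rule bdd_aboveI2)
  fix \<alpha> :: real assume "\<alpha> \<in> {0<..<1}"
  then have "(1 - \<alpha>) * hel_min \<mu> f M \<alpha> \<le> (1 - \<alpha>) * hel \<mu> (f 0) (f 1) \<alpha>"
    using assms by (intro mult_left_mono hel_min_le) auto
  also have "\<dots> = 1 - (\<integral>y. f 0 y powr \<alpha> * f 1 y powr (1 - \<alpha>) \<partial>\<mu>)"
    using \<open>\<alpha> \<in> {0<..<1}\<close> by (simp add: hel_def)
  also have "\<dots> \<le> 1" by (simp add: Bochner_Integration.integral_nonneg)
  finally show "(1 - \<alpha>) * hel_min \<mu> f M \<alpha> \<le> 1" .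
qed

lemma obtain_near_cSUP_mult:
  fixes g :: "'a \<Rightarrow> real"
  assumes "bdd_above (g ` A)" "A \<noteq> {}" "0 < m" "c \<le> (SUP a\<in>A. g a) * m"
  obtains a where "a \<in> A" "c - 1 < g a * m"
proof -
  have "(SUP a\<in>A. g a) - 1 / m < (SUP a\<in>A. g a)" using assms(3) by simp
  then obtain a where "a \<in> A" "(SUP a\<in>A. g a) - 1 / m < g a"
    using less_cSUP_iff[OF assms(2,1)] by blast
  moreover from this have "((SUP a\<in>A. g a) - 1 / m) * m < g a * m"
    using assms(3) by (intro mult_strict_right_mono)
  ultimately show ?thesis using assms(3,4) that by (simp add: algebra_simps)
qed

lemma obtain_alpha_hel_min:
  fixes c L \<delta> :: real and m :: nat
  assumes M: "2 \<le> M" and "0 \<le> c" "0 < \<delta>" "1 \<le> L"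
    and cond: "c + \<delta> * L + L \<le> (SUP \<alpha>\<in>{0<..<1}. (1 - \<alpha>) * hel_min \<mu> f M \<alpha>) * m"
  obtains \<alpha> where "0 < \<alpha>" "\<alpha> < 1" "c + \<delta> * L \<le> (1 - \<alpha>) * hel_min \<mu> f M \<alpha> * m"
proof -
  have "0 < real m"
  proof (rule ccontr)
    assume "\<not> 0 < real m"
    then have "c + \<delta> * L + L \<le> 0" using cond by simp
    moreover have "0 < \<delta> * L" using assms by simp
    ultimately show False using assms by linarith
  qed
  then obtain \<alpha> where "\<alpha> \<in> {0<..<1}" "c + \<delta> * L + L - 1 < (1 - \<alpha>) * hel_min \<mu> f M \<alpha> * m"
    using obtain_near_cSUP_mult[OF bdd_above_hel_min[OF M] _ _ cond] by auto
  then show ?thesis using that \<open>1 \<le> L\<close> by auto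
qed

lemma err_prob_le:
  assumes "finite V" "finite (carrier G)" "carrier G \<noteq> {}"
    and "\<And>x. x \<in> V \<rightarrow>\<^sub>E carrier G \<Longrightarrow>
      measure (obs_measure G \<mu> f E x) {y \<in> space (obs_measure G \<mu> f E x). \<not> dist_zero G V (\<psi> y) x} \<le> b"
  shows "err_prob G \<mu> f V E \<psi> \<le> b"
  unfolding err_prob_def
proof (rule Max.boundedI)
  have "finite (V \<rightarrow>\<^sub>E carrier G)" using assms(1,2) by (rule finite_PiE)
  then show "finite {measure (obs_measure G \<mu> f E x) {y \<in> space (obs_measure G \<mu> f E x). \<not> dist_zero G V (\<psi> y) x}
      | x. x \<in> V \<rightarrow>\<^sub>E carrier G}"
    by simp
  show "{measure (obs_measure G \<mu> f E x) {y \<in> space (obs_measure G \<mu> f E x). \<not> dist_zero G V (\<psi> y) x}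
      | x. x \<in> V \<rightarrow>\<^sub>E carrier G} \<noteq> {}"
    using assms(3) by (auto simp: PiE_eq_empty_iff)
qed (use assms(4) in auto)

lemma exp_neg_mult_ln_le:
  fixes b \<delta> :: real
  assumes "1 < b" "0 < \<delta>"
  shows "exp (-\<delta> * ln b) \<le> 1 / (b powr \<delta> - 1)"
proof -
  have "1 < b powr \<delta>" using powr_less_mono[OF assms(2), of b] assms(1) by simp
  then have "1 / b powr \<delta> \<le> 1 / (b powr \<delta> - 1)" by (intro divide_left_mono mult_pos_pos) auto
  then show ?thesis using assms by (simp add: powr_def exp_minus inverse_eq_divide)
qed

theorem theorem4:
  fixes n M :: nat
    and G :: "nat monoid"
    and E :: "(nat \<times> nat) set"
    and \<mu> :: "'b measure"
    and f :: "nat \<Rightarrow> 'b \<Rightarrow> real"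
    and \<psi> :: "((nat \<times> nat) \<Rightarrow> 'b) \<Rightarrow> (nat \<Rightarrow> nat)"
    and \<delta> :: real
  assumes n2: "n \<ge> 2" and M2: "M \<ge> 2"
    and grp: "group G" and carr: "carrier G = {..<M}"
    and edges: "E \<subseteq> {(i, j). i \<in> {1..n} \<and> j \<in> {1..n} \<and> j < i}"
    and conn: "graph_connected {1..n} E"
    and sf: "sigma_finite_measure \<mu>"
    and f_meas: "\<And>l. l < M \<Longrightarrow> f l \<in> borel_measurable \<mu>"
    and f_nonneg: "\<And>l y. l < M \<Longrightarrow> f l y \<ge> 0"
    and f_prob: "\<And>l. l < M \<Longrightarrow> prob_space (density \<mu> (\<lambda>y. ennreal (f l y)))"
    and mutual_ac: "\<And>l k. l < M \<Longrightarrow> k < M \<Longrightarrow>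
       absolutely_continuous (density \<mu> (\<lambda>y. ennreal (f l y))) (density \<mu> (\<lambda>y. ennreal (f k y)))"
    and psi_meas: "\<psi> \<in> measurable (PiM E (\<lambda>_. \<mu>)) (count_space ({1..n} \<rightarrow>\<^sub>E carrier G))"
    and psi_ml: "is_ml_rule G \<mu> f {1..n} E \<psi>"
    and \<delta>_pos: "\<delta> > 0"
    and cond: "(SUP \<alpha>\<in>{0<..<1}. (1 - \<alpha>) * hel_min \<mu> f M \<alpha>) * real (mincut {1..n} E)
        \<ge> 8 * tau_cut {1..n} E + (\<delta> + 8) * ln (2 * real n) + 4 * ln (real M)"
  shows "err_prob G \<mu> f {1..n} E \<psi> \<le> 1 / ((2 * real n) powr \<delta> - 1)"
proof -
  define V where "V = {1..n}"
  define L where "L = ln (2 * real n)"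
  define c where "c = 8 * tau_cut V E + 7 * L + 4 * ln (real M)"
  have EV: "E \<subseteq> V \<times> V" using edges by (auto simp: V_def)
  have L: "1 \<le> L"
    using exp_le n2 by (auto simp: L_def ln_ge_iff intro: order.trans[of _ 3])
  have c: "0 \<le> c" using tau_cut_nonneg[of V E] L M2 by (simp add: c_def V_def)
  have "c + \<delta> * L + L \<le> (SUP \<alpha>\<in>{0<..<1}. (1 - \<alpha>) * hel_min \<mu> f M \<alpha>) * mincut V E"
    using cond by (simp add: c_def V_def L_def algebra_simps)
  then obtain \<alpha> where \<alpha>: "0 < \<alpha>" "\<alpha> < 1"
    and h: "c + \<delta> * L \<le> (1 - \<alpha>) * hel_min \<mu> f M \<alpha> * mincut V E"
    using obtain_alpha_hel_min[OF M2 c \<delta>_pos L] by blast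
  have hel: "(1 - \<alpha>) * hel_min \<mu> f M \<alpha> \<le> (1 - \<alpha>) * hel \<mu> (f l) (f k) \<alpha>"
    if "l < M" "k < M" "l \<noteq> k" for l k
    using \<alpha> that by (intro mult_left_mono hel_min_le) auto
  have finV: "finite V" "V \<noteq> {}" "card V = n" using n2 by (auto simp: V_def)
  have carrier: "finite (carrier G)" "carrier G \<noteq> {}" "card (carrier G) = M"
    using M2 by (auto simp: carr lessThan_empty_iff)
  have "measure (obs_measure G \<mu> f E x) {y \<in> space (obs_measure G \<mu> f E x). \<not> dist_zero G V (\<psi> y) x}
      \<le> exp (-\<delta> * L)" if x: "x \<in> V \<rightarrow>\<^sub>E carrier G" for x
  proof -
    have "measure (obs_measure G \<mu> f E x) {y \<in> space (obs_measure G \<mu> f E x). \<not> dist_zero G V (\<psi> y) x}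
        \<le> (\<Sum>w\<in>{w \<in> V \<rightarrow>\<^sub>E carrier G. \<not> dist_zero G V w x}.
              exp (-((1 - \<alpha>) * hel_min \<mu> f M \<alpha>)) ^ edge_disagreements G E w x)"
      using \<alpha> psi_ml by (intro measure_ml_error_le[OF grp carr finV(1) EV sf f_meas f_nonneg f_prob _ x _ _ hel])
        (auto simp: V_def)
    also have "\<dots> \<le> exp (-(\<delta> * L))"
      using h \<delta>_pos L finV carrier
      by (intro sum_exp_power_edge_disagreements_le[OF grp carrier(1) x finV(1,2) EV]) (auto simp: c_def L_def)
    finally show ?thesis by simp
  qed
  then have "err_prob G \<mu> f V E \<psi> \<le> exp (-\<delta> * L)"
    using finV carrier by (intro err_prob_le) auto
  also have "\<dots> \<le> 1 / ((2 * real n) powr \<delta> - 1)"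
    unfolding L_def using n2 \<delta>_pos by (intro exp_neg_mult_ln_le) auto
  finally show ?thesis by (simp add: V_def)
qed

end
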